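(* Let $D$ be an upright long knot diagram (possibly with null vertices) and let $D'$ be obtained from $D$ by the null vertex move: an edge of $D$ with rotation number $\varphi$ is split, by inserting a new null vertex at a point where its tangent points upward, into two consecutive edges with rotation numbers $\varphi'$ and $\varphi''$, where $\varphi'+\varphi''=\varphi$ (or conversely, such a null vertex is removed). Then $\theta_0(D')=\theta_0(D)$.
   Context: An upright long knot diagram is a planar diagram of a long oriented knot such that at every crossing both strands point upward and the knot points upward at its beginning and end. It may contain null vertices (marked points on the knot, away from crossings, where the tangent points upward, whose only role is to cut edges). Edges are the arcs obtained by cutting the knot at all crossings (both strands) and null vertices; they carry distinct labels, $\ell^+$ denotes the label of the edge following $\ell$. Each edge $k$ has a rotation number $\varphi_k$: the signed number of points where its tangent is horizontal and heading right, cups $+1$, caps $-1$. A crossing is $c=(s,i,j)$: sign $s=\pm1$, incoming over-edge $i$, incoming under-edge $j$ (outgoing edges $i^+$, $j^+$); $X$ is the set of crossings. A null vertex with incoming edge $j$ and outgoing edge $k$ is recorded as $(j,k)$. Let $A=I+\sum_cA_c+\sum_{\mathrm{nv}}A_{\mathrm{nv}}$ where $A_c$ is zero except for entries $-T^s$ at $(i,i^+)$, $T^s-1$ at $(i,j^+)$, $-1$ at $(j,j^+)$, and $A_{\mathrm{nv}}$ is zero except for $-1$ at $(j,k)$. Let $G=(g_{\alpha\beta})=A^{-1}$ over $\mathbb{Q}(T)$. Let $T_3=T_1T_2$ and let $g_{\nu\alpha\beta}$ be $g_{\alpha\beta}$ with $T\to T_\nu$ ($\nu=1,2,3$). For crossings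 $c=(s,i,j)$, $c_0=(s_0,i_0,j_0)$, $c_1=(s_1,i_1,j_1)$ and an edge $k$: $$F_1(c)= s\Big[\tfrac12 - g_{3ii} + T_2^s g_{1ii}g_{2ji} - T_2^s g_{3jj}g_{2ji} - (T_2^s-1)g_{3ii}g_{2ji} + (T_3^s-1)g_{2ji}g_{3ji} - g_{1ii}g_{2jj} + 2g_{3ii}g_{2jj} + g_{1ii}g_{3jj} - g_{2ii}g_{3jj}\Big]$$ $$\quad + \frac{s}{T_2^s-1}\Big[(T_1^s-1)T_2^s\big(g_{3jj}g_{1ji}-g_{2jj}g_{1ji}+T_2^sg_{1ji}g_{2ji}\big) + (T_3^s-1)g_{3ji}\big(1-T_2^sg_{1ii}+g_{2ij}+(T_2^s-2)g_{2jj}-(T_1^s-1)(T_2^s+1)g_{1ji}\big)\Big],$$ $$F_2(c_0,c_1)=\frac{s_1(T_1^{s_0}-1)(T_3^{s_1}-1)g_{1j_1i_0}g_{3j_0i_1}}{T_2^{s_1}-1}\Big(T_2^{s_0}g_{2i_1i_0}+g_{2j_1j_0}-T_2^{s_0}g_{2j_1i_0}-g_{2i_1j_0}\Big),\qquad F_3(k)=(g_{3kk}-\tfrac12)\varphi_k,$$ and $\theta_0(D)=\sum_{c\in X}F_1(c)+\sum_{c_0,c_1\in X}F_2(c_0,c_1)+\sum_{\text{edges }k}F_3(k)$ (ordered pairs, including $c_0=c_1$; null vertices contribute no terms of their own). *)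

theory Defs
  imports "Jordan_Normal_Form.Gauss_Jordan_Elimination"
          "HOL-Computational_Algebra.Polynomial"
          "HOL-Computational_Algebra.Fraction_Field"
begin

text \<open>Combinatorial data of an upright long knot diagram.
  edges: the edge labels in the order in which the knot traverses them
    (so the successor l^+ of l is the next list element);
  crossings: the crossings (s, i, j), s = +-1, i incoming over-edge, j incoming under-edge;
  nullverts: the null vertices (j, k), j incoming, k outgoing edge;
  rot: the rotation number of each edge.\<close>

record 'l diagram =
  edges :: "'l list"
  crossings :: "(int \<times> 'l \<times> 'l) list"
  nullverts :: "('l \<times> 'l) list"
  rot :: "'l \<Rightarrow> int"

definition ix :: "'l diagram \<Rightarrow> 'l \<Rightarrow> nat" where
  "ix D l = (LEAST n. n < length (edges D) \<and> edges D ! n = l)"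

definition nxt :: "'l diagram \<Rightarrow> 'l \<Rightarrow> 'l" where
  "nxt D l = edges D ! (ix D l + 1)"

definition wf_diagram :: "'l diagram \<Rightarrow> bool" where
  "wf_diagram D \<longleftrightarrow>
     edges D \<noteq> [] \<and> distinct (edges D) \<and>
     (\<forall>(s, i, j) \<in> set (crossings D).
        (s = 1 \<or> s = -1) \<and> i \<in> set (butlast (edges D)) \<and> j \<in> set (butlast (edges D)) \<and> i \<noteq> j) \<and>
     (\<forall>(j, k) \<in> set (nullverts D). j \<in> set (butlast (edges D)) \<and> k = nxt D j) \<and>
     (\<forall>l \<in> set (butlast (edges D)).
        length (filter (\<lambda>(s, i, j). i = l \<or> j = l) (crossings D))
        + length (filter (\<lambda>(j, k). j = l) (nullverts D)) = 1)"

definition cr_entry :: "'l diagram \<Rightarrow> 'a::field \<Rightarrow> int \<times> 'l \<times> 'l \<Rightarrow> nat \<Rightarrow> nat \<Rightarrow> 'a" where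
  "cr_entry D t c r q = (case c of (s, i, j) \<Rightarrow>
      (if (r, q) = (ix D i, ix D (nxt D i)) then - (t powi s) else 0)
    + (if (r, q) = (ix D i, ix D (nxt D j)) then t powi s - 1 else 0)
    + (if (r, q) = (ix D j, ix D (nxt D j)) then -1 else 0))"

definition nv_entry :: "'l diagram \<Rightarrow> 'l \<times> 'l \<Rightarrow> nat \<Rightarrow> nat \<Rightarrow> 'a::field" where
  "nv_entry D v r q = (case v of (j, k) \<Rightarrow> if (r, q) = (ix D j, ix D k) then -1 else 0)"

definition Amat :: "'l diagram \<Rightarrow> 'a::field \<Rightarrow> 'a mat" where
  "Amat D t = mat (length (edges D)) (length (edges D)) (\<lambda>(r, q).
      (if r = q then 1 else 0)
    + sum_list (map (\<lambda>c. cr_entry D t c r q) (crossings D))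
    + sum_list (map (\<lambda>v. nv_entry D v r q) (nullverts D)))"

definition Gmat :: "'l diagram \<Rightarrow> 'a::field \<Rightarrow> 'a mat" where
  "Gmat D t = the (mat_inverse (Amat D t))"

definition gg :: "'l diagram \<Rightarrow> 'a::field \<Rightarrow> 'l \<Rightarrow> 'l \<Rightarrow> 'a" where
  "gg D t a b = Gmat D t $$ (ix D a, ix D b)"

definition F1 :: "'l diagram \<Rightarrow> 'a::field \<Rightarrow> 'a \<Rightarrow> int \<times> 'l \<times> 'l \<Rightarrow> 'a" where
  "F1 D T1 T2 c = (case c of (s, i, j) \<Rightarrow>
     let T3 = T1 * T2; g1 = gg D T1; g2 = gg D T2; g3 = gg D T3; \<sigma> = (of_int s :: 'a) in
     \<sigma> * (1/2 - g3 i i + T2 powi s * g1 i i * g2 j i - T2 powi s * g3 j j * g2 j i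
          - (T2 powi s - 1) * g3 i i * g2 j i + (T3 powi s - 1) * g2 j i * g3 j i
          - g1 i i * g2 j j + 2 * g3 i i * g2 j j + g1 i i * g3 j j - g2 i i * g3 j j)
   + \<sigma> / (T2 powi s - 1) *
       ((T1 powi s - 1) * T2 powi s *
          (g3 j j * g1 j i - g2 j j * g1 j i + T2 powi s * g1 j i * g2 j i)
      + (T3 powi s - 1) * g3 j i *
          (1 - T2 powi s * g1 i i + g2 i j + (T2 powi s - 2) * g2 j j
           - (T1 powi s - 1) * (T2 powi s + 1) * g1 j i)))"

definition F2 :: "'l diagram \<Rightarrow> 'a::field \<Rightarrow> 'a \<Rightarrow> int \<times> 'l \<times> 'l \<Rightarrow> int \<times> 'l \<times> 'l \<Rightarrow> 'a" where
  "F2 D T1 T2 c0 c1 = (case c0 of (s0, i0, j0) \<Rightarrow> case c1 of (s1, i1, j1) \<Rightarrow>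
     let T3 = T1 * T2; g1 = gg D T1; g2 = gg D T2; g3 = gg D T3 in
     of_int s1 * (T1 powi s0 - 1) * (T3 powi s1 - 1) * g1 j1 i0 * g3 j0 i1 / (T2 powi s1 - 1)
     * (T2 powi s0 * g2 i1 i0 + g2 j1 j0 - T2 powi s0 * g2 j1 i0 - g2 i1 j0))"

definition F3 :: "'l diagram \<Rightarrow> 'a::field \<Rightarrow> 'a \<Rightarrow> 'l \<Rightarrow> 'a" where
  "F3 D T1 T2 k = (gg D (T1 * T2) k k - 1/2) * of_int (rot D k)"

definition theta0_at :: "'l diagram \<Rightarrow> 'a::field \<Rightarrow> 'a \<Rightarrow> 'a" where
  "theta0_at D T1 T2 =
     sum_list (map (F1 D T1 T2) (crossings D))
   + sum_list (map (\<lambda>(c0, c1). F2 D T1 T2 c0 c1) (List.product (crossings D) (crossings D)))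
   + sum_list (map (F3 D T1 T2) (edges D))"

text \<open>The field Q(T1,T2), realised as the fraction field of Q[T1][T2],
  and the two variables.\<close>
type_synonym QT = "rat poly poly fract"

definition varT1 :: QT where "varT1 = Fract [:[:0, 1:]:] 1"
definition varT2 :: QT where "varT2 = Fract [:0, 1:] 1"

definition theta0 :: "'l diagram \<Rightarrow> QT" where
  "theta0 D = theta0_at D varT1 varT2"

text \<open>Incoming occurrences of e at its head become b; the
  outgoing occurrence (k = e in a null vertex) becomes a; outgoing edges of crossings
  are determined by the edge order.\<close>
definition null_vertex_move :: "'l diagram \<Rightarrow> 'l diagram \<Rightarrow> bool" where
  "null_vertex_move D D' \<longleftrightarrow> (\<exists>e a b.
     e \<in> set (edges D) \<and> a \<noteq> b \<and> a \<notin> set (edges D) - {e} \<and> b \<notin> set (edges D) - {e} \<and>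
     edges D' = concat (map (\<lambda>l. if l = e then [a, b] else [l]) (edges D)) \<and>
     crossings D' = map (\<lambda>(s, i, j). (s, if i = e then b else i, if j = e then b else j)) (crossings D) \<and>
     nullverts D' = (a, b) # map (\<lambda>(j, k). (if j = e then b else j, if k = e then a else k)) (nullverts D) \<and>
     (\<forall>l \<in> set (edges D). l \<noteq> e \<longrightarrow> rot D' l = rot D l) \<and>
     rot D' a + rot D' b = rot D e)"

end

theory Submission
  imports Defs "Jordan_Normal_Form.Determinant"
begin

(* Splitting the edge e (index p) into a and b adds one row to A, the null vertex row
   e_p - e_(p+1), and otherwise only duplicates the index p. Hence the inverse of the new
   matrix is G with row and column p duplicated and 1 subtracted at (b, a). So g' agrees
   with g on the old edges when e is read as b (its half entering the next vertex), and
   g'_aa = g'_bb = g_ee: the crossing terms do not change and the rotation terms of a and b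
   add up to the one of e. That A is invertible over Q(T1, T2) follows by clearing the
   negative powers of T and specialising T1 = T2 = 1, where A becomes upper unitriangular. *)

definition skip_idx :: "nat \<Rightarrow> nat \<Rightarrow> nat" where
  "skip_idx q m = (if m < q then m else Suc m)"

definition merge_idx :: "nat \<Rightarrow> nat \<Rightarrow> nat" where
  "merge_idx p r = (if r \<le> p then r else r - 1)"

lemma skip_idx_neq [simp]: "skip_idx q m \<noteq> q" "(q = skip_idx q m) = False"
  unfolding skip_idx_def by simp_all

lemma skip_idx_Suc_eq_iff [simp]: "(skip_idx (Suc p) m = p) = (m = p)"
  unfolding skip_idx_def by simp

lemma skip_idx_less: "m < n \<Longrightarrow> skip_idx q m < Suc n"
  unfolding skip_idx_def by simp

lemma merge_idx_skip_idx [simp]: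
  "merge_idx p (skip_idx p m) = m" "merge_idx p (skip_idx (Suc p) m) = m"
  unfolding merge_idx_def skip_idx_def by simp_all

lemma merge_idx_self [simp]: "merge_idx p p = p" "merge_idx p (Suc p) = p"
  unfolding merge_idx_def by simp_all

lemma eq_skip_idx_iff:
  "r \<noteq> p \<Longrightarrow> (r = skip_idx p m) = (merge_idx p r = m)"
  "r \<noteq> Suc p \<Longrightarrow> (r = skip_idx (Suc p) m) = (merge_idx p r = m)"
  unfolding merge_idx_def skip_idx_def by auto

lemma merge_idx_less: "r < Suc n \<Longrightarrow> p < n \<Longrightarrow> merge_idx p r < n"
  unfolding merge_idx_def by auto

lemma merge_idx_eq_iff:
  "r \<noteq> p \<Longrightarrow> (merge_idx p r = merge_idx p q) = (r = q \<or> r = Suc p \<and> q = p)"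
  unfolding merge_idx_def by auto

lemma sum_lessThan_Suc_skip_idx:
  fixes g :: "nat \<Rightarrow> 'a::comm_monoid_add"
  assumes "q \<le> n"
  shows "(\<Sum>k<Suc n. g k) = g q + (\<Sum>m<n. g (skip_idx q m))"
proof -
  have "bij_betw (skip_idx q) {..<n} ({..<Suc n} - {q})"
    using assms by (intro bij_betw_byWitness[where f' = "\<lambda>k. if k < q then k else k - 1"])
      (auto simp: skip_idx_def)
  then have "(\<Sum>m<n. g (skip_idx q m)) = (\<Sum>k\<in>{..<Suc n} - {q}. g k)"
    by (rule sum.reindex_bij_betw)
  moreover have "q \<in> {..<Suc n}"
    using assms by simp
  ultimately show ?thesis
    by (simp only: sum.remove[OF finite_lessThan])
qed

text \<open>The matrix A after the edge with index \<open>p\<close> is split by a null vertex into the edges \<open>p\<close>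
  and \<open>Suc p\<close>: row \<open>p\<close> is the null vertex, and the entry \<open>(Suc p, p)\<close> loses the diagonal 1 of
  the old edge.\<close>

definition subdivide_mat :: "nat \<Rightarrow> nat \<Rightarrow> 'a::ring_1 mat \<Rightarrow> 'a mat" where
  "subdivide_mat n p A = mat (Suc n) (Suc n) (\<lambda>(r, q).
     if r = p then (if q = p then 1 else if q = Suc p then -1 else 0)
     else if q = Suc p then (if r = Suc p then 1 else 0)
     else A $$ (merge_idx p r, merge_idx p q) - (if r = Suc p \<and> q = p then 1 else 0))"

definition subdivide_inverse :: "nat \<Rightarrow> nat \<Rightarrow> 'a::ring_1 mat \<Rightarrow> 'a mat" where
  "subdivide_inverse n p G = mat (Suc n) (Suc n) (\<lambda>(r, q).
     G $$ (merge_idx p r, merge_idx p q) - (if r = Suc p \<and> q = p then 1 else 0))"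

lemma subdivide_inverse_carrier: "subdivide_inverse n p G \<in> carrier_mat (Suc n) (Suc n)"
  unfolding subdivide_inverse_def by simp

lemma subdivide_mat_mult_inverse:
  fixes A G :: "'a::comm_ring_1 mat"
  assumes A: "A \<in> carrier_mat n n" and G: "G \<in> carrier_mat n n"
    and AG: "A * G = 1\<^sub>m n" and p: "p < n"
  shows "subdivide_mat n p A * subdivide_inverse n p G = 1\<^sub>m (Suc n)"
proof (rule eq_matI)
  let ?A' = "subdivide_mat n p A" and ?G' = "subdivide_inverse n p G"
  fix r q assume "r < dim_row (1\<^sub>m (Suc n))" "q < dim_col (1\<^sub>m (Suc n))"
  then have r: "r < Suc n" and q: "q < Suc n"
    by simp_all
  have A'_row_p: "?A' $$ (p, k) = (if k = p then 1 else if k = Suc p then -1 else 0)"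
    if "k < Suc n" for k
    using that p by (simp add: subdivide_mat_def)
  have A'_entry: "?A' $$ (r, skip_idx (Suc p) m)
      = A $$ (merge_idx p r, m) - (if r = Suc p \<and> m = p then 1 else 0)"
    if "r \<noteq> p" "m < n" for m
    using that r skip_idx_less[OF \<open>m < n\<close>] by (simp add: subdivide_mat_def)
  have G'_entry: "?G' $$ (k, q) = G $$ (merge_idx p k, merge_idx p q) - (if k = Suc p \<and> q = p then 1 else 0)"
    if "k < Suc n" for k
    using that q by (simp add: subdivide_inverse_def)
  have AG_entry: "(\<Sum>m<n. A $$ (i, m) * G $$ (m, j)) = (if i = j then 1 else 0)"
    if "i < n" "j < n" for i j
    using arg_cong[OF AG, of "\<lambda>M. M $$ (i, j)"] A G that
    by (simp add: scalar_prod_def lessThan_atLeast0)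
  have "(?A' * ?G') $$ (r, q) = (\<Sum>k<Suc n. ?A' $$ (r, k) * ?G' $$ (k, q))"
    using r q by (simp add: subdivide_mat_def subdivide_inverse_def scalar_prod_def lessThan_atLeast0)
  also have "\<dots> = ?A' $$ (r, Suc p) * ?G' $$ (Suc p, q)
      + (\<Sum>m<n. ?A' $$ (r, skip_idx (Suc p) m) * ?G' $$ (skip_idx (Suc p) m, q))"
    using p by (intro sum_lessThan_Suc_skip_idx) simp
  also have "\<dots> = (if r = q then 1 else 0)"
  proof (cases "r = p")
    case True
    have "(\<Sum>m<n. ?A' $$ (p, skip_idx (Suc p) m) * ?G' $$ (skip_idx (Suc p) m, q))
        = (\<Sum>m<n. if m = p then ?G' $$ (p, q) else 0)"
      using p by (intro sum.cong refl) (auto simp: A'_row_p skip_idx_less skip_idx_def)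
    then show ?thesis
      using True p q by (simp add: A'_row_p G'_entry)
  next
    case False
    have "(\<Sum>m<n. ?A' $$ (r, skip_idx (Suc p) m) * ?G' $$ (skip_idx (Suc p) m, q))
        = (\<Sum>m<n. A $$ (merge_idx p r, m) * G $$ (m, merge_idx p q)
                    - (if r = Suc p \<and> m = p then G $$ (p, merge_idx p q) else 0))"
      using False by (intro sum.cong refl) (auto simp: A'_entry G'_entry skip_idx_less left_diff_distrib)
    also have "\<dots> = (\<Sum>m<n. A $$ (merge_idx p r, m) * G $$ (m, merge_idx p q))
          - (if r = Suc p then G $$ (p, merge_idx p q) else 0)"
      using p by (cases "r = Suc p") (simp_all add: sum_subtractf)
    also have "\<dots> = (if merge_idx p r = merge_idx p q then 1 else 0)
        - (if r = Suc p then G $$ (p, merge_idx p q) else 0)"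
      using AG_entry merge_idx_less[OF r p] merge_idx_less[OF q p] by simp
    finally have sum_rest: "(\<Sum>m<n. ?A' $$ (r, skip_idx (Suc p) m) * ?G' $$ (skip_idx (Suc p) m, q))
        = (if merge_idx p r = merge_idx p q then 1 else 0)
          - (if r = Suc p then G $$ (p, merge_idx p q) else 0)" .
    have "?A' $$ (r, Suc p) = (if r = Suc p then 1 else 0)"
      using False r p by (simp add: subdivide_mat_def)
    with sum_rest show ?thesis
      using merge_idx_eq_iff[OF False, of q] p by (auto simp: G'_entry)
  qed
  finally show "(?A' * ?G') $$ (r, q) = 1\<^sub>m (Suc n) $$ (r, q)"
    using r q by simp
qed (simp_all add: subdivide_mat_def subdivide_inverse_def)

lemma mat_inverse_eq_Some:
  fixes A C :: "'a::field mat"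
  assumes A: "A \<in> carrier_mat n n" and C: "C \<in> carrier_mat n n" and AC: "A * C = 1\<^sub>m n"
  shows "mat_inverse A = Some C"
proof -
  have CA: "C * A = 1\<^sub>m n"
    by (rule mat_mult_left_right_inverse[OF A C AC])
  then have "A \<in> Units (ring_mat TYPE('a) n ())"
    using A C AC by (auto simp: Units_def ring_mat_def)
  then obtain B where B: "mat_inverse A = Some B"
    by (cases "mat_inverse A") (auto dest: mat_inverse(1)[OF A, where b = "()"])
  then have BA: "B * A = 1\<^sub>m n" and B_carrier: "B \<in> carrier_mat n n"
    using mat_inverse(2)[OF A] by auto
  have "B = B * (A * C)"
    using B_carrier by (simp add: AC)
  also have "\<dots> = C"
    using assoc_mult_mat[OF B_carrier A C] BA C by simp
  finally show ?thesis
    using B by simp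
qed

lemma mat_inverse_det_nonzero:
  fixes A :: "'a::field mat"
  assumes A: "A \<in> carrier_mat n n" and "det A \<noteq> 0"
  obtains C where "mat_inverse A = Some C" "A * C = 1\<^sub>m n" "C \<in> carrier_mat n n"
proof -
  have "A \<in> Units (ring_mat TYPE('a) n ())"
    by (rule det_non_zero_imp_unit[OF assms])
  then obtain C where "mat_inverse A = Some C"
    by (cases "mat_inverse A") (auto dest: mat_inverse(1)[OF A, where b = "()"])
  with mat_inverse(2)[OF A] that show thesis
    by auto
qed

lemma ix_nth: "distinct (edges D) \<Longrightarrow> k < length (edges D) \<Longrightarrow> ix D (edges D ! k) = k"
  unfolding ix_def by (rule Least_equality) (auto simp: nth_eq_iff_index_eq)

lemma ix_less_nth_ix:
  assumes "x \<in> set (edges D)"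
  shows "ix D x < length (edges D)" "edges D ! ix D x = x"
proof -
  obtain k where "k < length (edges D)" "edges D ! k = x"
    using assms by (auto simp: in_set_conv_nth)
  then have "ix D x < length (edges D) \<and> edges D ! ix D x = x"
    unfolding ix_def by (intro LeastI[where P = "\<lambda>n. n < length (edges D) \<and> edges D ! n = x"]) simp
  then show "ix D x < length (edges D)" "edges D ! ix D x = x"
    by simp_all
qed

lemma ix_nxt:
  assumes "distinct (edges D)" "x \<in> set (butlast (edges D))"
  shows "Suc (ix D x) < length (edges D)" "ix D (nxt D x) = Suc (ix D x)"
proof -
  obtain k where "k < length (butlast (edges D))" "butlast (edges D) ! k = x"
    using assms(2) by (auto simp: in_set_conv_nth)
  then have k: "Suc k < length (edges D)" "edges D ! k = x"
    by (simp_all add: nth_butlast)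
  then have "ix D x = k"
    using assms(1) ix_nth[of D k] by simp
  then show "Suc (ix D x) < length (edges D)" "ix D (nxt D x) = Suc (ix D x)"
    using k assms(1) ix_nth[of D "Suc k"] by (simp_all add: nxt_def)
qed

lemma wf_diagram_crossingD:
  assumes "wf_diagram D" "(s, i, j) \<in> set (crossings D)"
  shows "s = 1 \<or> s = -1" "i \<in> set (butlast (edges D))" "j \<in> set (butlast (edges D))"
  using assms unfolding wf_diagram_def by fastforce+

lemma wf_diagram_nullvertD:
  assumes "wf_diagram D" "(j, k) \<in> set (nullverts D)"
  shows "j \<in> set (butlast (edges D))" "k = nxt D j"
  using assms unfolding wf_diagram_def by fastforce+

lemma Gmat_right_inverse:
  fixes t :: "'a::field"
  assumes "det (Amat D t) \<noteq> 0"
  shows "Amat D t * Gmat D t = 1\<^sub>m (length (edges D))"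
    "Gmat D t \<in> carrier_mat (length (edges D)) (length (edges D))"
proof -
  have "Amat D t \<in> carrier_mat (length (edges D)) (length (edges D))"
    by (simp add: Amat_def)
  then obtain C where "mat_inverse (Amat D t) = Some C"
    "Amat D t * C = 1\<^sub>m (length (edges D))" "C \<in> carrier_mat (length (edges D)) (length (edges D))"
    using assms by (rule mat_inverse_det_nonzero)
  then show "Amat D t * Gmat D t = 1\<^sub>m (length (edges D))"
    "Gmat D t \<in> carrier_mat (length (edges D)) (length (edges D))"
    by (simp_all add: Gmat_def)
qed

locale null_vertex_insertion =
  fixes D D' :: "'l diagram" and e a b :: 'l
  assumes wf: "wf_diagram D" and wf': "wf_diagram D'"
    and e: "e \<in> set (edges D)"
    and edges': "edges D' = concat (map (\<lambda>l. if l = e then [a, b] else [l]) (edges D))"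
    and crossings': "crossings D' =
      map (\<lambda>(s, i, j). (s, if i = e then b else i, if j = e then b else j)) (crossings D)"
    and nullverts': "nullverts D' =
      (a, b) # map (\<lambda>(j, k). (if j = e then b else j, if k = e then a else k)) (nullverts D)"
    and rot_other: "\<forall>l \<in> set (edges D). l \<noteq> e \<longrightarrow> rot D' l = rot D l"
    and rot_split: "rot D' a + rot D' b = rot D e"
begin

abbreviation "n \<equiv> length (edges D)"
abbreviation "p \<equiv> ix D e"

text \<open>Old edges keep their labels, except that \<open>e\<close> is called \<open>b\<close> where it enters a vertex
  and \<open>a\<close> where it leaves one.\<close>

definition incoming :: "'l \<Rightarrow> 'l" where "incoming x = (if x = e then b else x)"
definition outgoing :: "'l \<Rightarrow> 'l" where "outgoing x = (if x = e then a else x)"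

lemma distinct_edges: "distinct (edges D)" "distinct (edges D')"
  using wf wf' by (simp_all add: wf_diagram_def)

lemma p_less: "p < n" and nth_p: "edges D ! p = e"
  using ix_less_nth_ix[OF e] by simp_all

lemma edges'_eq: "edges D' = take p (edges D) @ a # b # drop (Suc p) (edges D)"
proof -
  have edges_split: "edges D = take p (edges D) @ e # drop (Suc p) (edges D)"
    using id_take_nth_drop[OF p_less] nth_p by simp
  have "distinct (take p (edges D) @ e # drop (Suc p) (edges D))"
    using distinct_edges(1) by (simp only: edges_split[symmetric])
  then have "e \<notin> set (take p (edges D))" "e \<notin> set (drop (Suc p) (edges D))"
    by auto
  moreover have "concat (map (\<lambda>l. if l = e then [a, b] else [l]) xs) = xs" if "e \<notin> set xs" for xs
    using that by (induction xs) auto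
  ultimately show ?thesis
    unfolding edges' by (subst edges_split) simp
qed

lemma length_edges': "length (edges D') = Suc n"
  unfolding edges'_eq using p_less by simp

lemma ix'_a: "ix D' a = p" and ix'_b: "ix D' b = Suc p"
  using ix_nth[OF distinct_edges(2), of p] ix_nth[OF distinct_edges(2), of "Suc p"] p_less
  unfolding edges'_eq by (simp_all add: nth_append)

lemma ix_neq_p: "x \<in> set (edges D) \<Longrightarrow> x \<noteq> e \<Longrightarrow> ix D x \<noteq> p"
  using ix_less_nth_ix(2)[of x D] nth_p by metis

lemma ix'_old:
  assumes "x \<in> set (edges D)" "x \<noteq> e"
  shows "ix D' x = skip_idx p (ix D x)"
proof -
  have "edges D' ! skip_idx p (ix D x) = x"
    using ix_neq_p[OF assms] ix_less_nth_ix[OF assms(1)] p_less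
    unfolding edges'_eq skip_idx_def by (auto simp: nth_append)
  then show ?thesis
    using ix_nth[OF distinct_edges(2), of "skip_idx p (ix D x)"] ix_less_nth_ix(1)[OF assms(1)]
    by (simp add: length_edges' skip_idx_less)
qed

lemma ix'_incoming: "x \<in> set (edges D) \<Longrightarrow> ix D' (incoming x) = skip_idx p (ix D x)"
  using ix'_old[of x] ix'_b by (cases "x = e") (simp_all add: incoming_def skip_idx_def)

lemma ix'_outgoing: "x \<in> set (edges D) \<Longrightarrow> ix D' (outgoing x) = skip_idx (Suc p) (ix D x)"
  using ix'_old[of x] ix'_a ix_neq_p[of x] by (cases "x = e") (auto simp: outgoing_def skip_idx_def)

lemma ix'_nxt_incoming:
  assumes "x \<in> set (butlast (edges D))"
  shows "ix D' (nxt D' (incoming x)) = skip_idx (Suc p) (ix D (nxt D x))"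
proof -
  have x: "x \<in> set (edges D)"
    using assms by (rule in_set_butlastD)
  have "Suc (skip_idx p (ix D x)) < length (edges D')"
    using ix_nxt(1)[OF distinct_edges(1) assms] by (simp add: length_edges' skip_idx_def)
  then have "ix D' (nxt D' (incoming x)) = Suc (skip_idx p (ix D x))"
    unfolding nxt_def ix'_incoming[OF x] by (simp add: ix_nth[OF distinct_edges(2)])
  then show ?thesis
    unfolding ix_nxt(2)[OF distinct_edges(1) assms] by (simp add: skip_idx_def)
qed

definition relabel_crossing :: "int \<times> 'l \<times> 'l \<Rightarrow> int \<times> 'l \<times> 'l" where
  "relabel_crossing c = (case c of (s, i, j) \<Rightarrow> (s, incoming i, incoming j))"

lemma crossings'_eq: "crossings D' = map relabel_crossing (crossings D)"
  unfolding crossings' relabel_crossing_def incoming_def by simp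

lemma nullverts'_eq:
  "nullverts D' = (a, b) # map (\<lambda>(j, k). (incoming j, outgoing k)) (nullverts D)"
  unfolding nullverts' incoming_def outgoing_def by simp

lemma cr_entry_relabel_crossing:
  assumes c: "c \<in> set (crossings D)"
  shows "cr_entry D' t (relabel_crossing c) r q
    = (if r = p \<or> q = Suc p then 0 else cr_entry D t c (merge_idx p r) (merge_idx p q))"
proof -
  obtain s i j where c_eq: "c = (s, i, j)"
    by (cases c)
  have ij: "i \<in> set (butlast (edges D))" "j \<in> set (butlast (edges D))"
    using wf_diagram_crossingD[OF wf c[unfolded c_eq]] by simp_all
  note ixs = ix'_incoming[OF in_set_butlastD[OF ij(1)]] ix'_incoming[OF in_set_butlastD[OF ij(2)]]
    ix'_nxt_incoming[OF ij(1)] ix'_nxt_incoming[OF ij(2)]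
  show ?thesis
  proof (cases "r = p \<or> q = Suc p")
    case True
    then show ?thesis
      unfolding c_eq relabel_crossing_def cr_entry_def prod.case ixs by auto
  next
    case False
    then show ?thesis
      unfolding c_eq relabel_crossing_def cr_entry_def prod.case ixs
      using eq_skip_idx_iff(1)[of r p] eq_skip_idx_iff(2)[of q p] by simp
  qed
qed

lemma nv_entry_relabel:
  assumes v: "v \<in> set (nullverts D)"
  shows "nv_entry D' ((\<lambda>(j, k). (incoming j, outgoing k)) v) r q
    = (if r = p \<or> q = Suc p then 0 else (nv_entry D v (merge_idx p r) (merge_idx p q) :: 'a::field))"
proof -
  obtain j k where v_eq: "v = (j, k)"
    by (cases v)
  have j: "j \<in> set (butlast (edges D))" and k: "k = nxt D j"
    using wf_diagram_nullvertD[OF wf v[unfolded v_eq]] by simp_all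
  have "k \<in> set (edges D)"
    using ix_nxt(1)[OF distinct_edges(1) j] unfolding k nxt_def by simp
  note ixs = ix'_incoming[OF in_set_butlastD[OF j]] ix'_outgoing[OF this]
  show ?thesis
  proof (cases "r = p \<or> q = Suc p")
    case True
    then show ?thesis
      unfolding v_eq nv_entry_def prod.case ixs by auto
  next
    case False
    then show ?thesis
      unfolding v_eq nv_entry_def prod.case ixs
      using eq_skip_idx_iff(1)[of r p] eq_skip_idx_iff(2)[of q p] by simp
  qed
qed

lemma Amat_subdivide: "Amat D' t = subdivide_mat n p (Amat D t)"
proof (rule eq_matI)
  fix r q assume "r < dim_row (subdivide_mat n p (Amat D t))" "q < dim_col (subdivide_mat n p (Amat D t))"
  then have r: "r < Suc n" and q: "q < Suc n"
    by (simp_all add: subdivide_mat_def)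
  let ?merged = "r = p \<or> q = Suc p"
  have crossing_sum: "sum_list (map (\<lambda>c. cr_entry D' t c r q) (crossings D'))
      = (if ?merged then 0 else sum_list (map (\<lambda>c. cr_entry D t c (merge_idx p r) (merge_idx p q)) (crossings D)))"
    unfolding crossings'_eq map_map o_def
    by (simp add: cr_entry_relabel_crossing cong: map_cong)
  have nullvert_sum: "sum_list (map (\<lambda>v. nv_entry D' v r q) (nullverts D'))
      = nv_entry D' (a, b) r q
        + (if ?merged then 0 else sum_list (map (\<lambda>v. nv_entry D v (merge_idx p r) (merge_idx p q)) (nullverts D)))"
    unfolding nullverts'_eq list.map sum_list.Cons map_map o_def
    by (simp add: nv_entry_relabel cong: map_cong)
  have new_nullvert: "nv_entry D' (a, b) r q = (if r = p \<and> q = Suc p then -1 else 0)"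
    by (simp add: nv_entry_def ix'_a ix'_b)
  show "Amat D' t $$ (r, q) = subdivide_mat n p (Amat D t) $$ (r, q)"
  proof (cases ?merged)
    case True
    then show ?thesis
      using r q p_less by (auto simp: Amat_def length_edges' subdivide_mat_def crossing_sum nullvert_sum new_nullvert)
  next
    case False
    then show ?thesis
      using r q merge_idx_less[OF r p_less] merge_idx_less[OF q p_less] merge_idx_eq_iff[of r p q]
      by (auto simp: Amat_def length_edges' subdivide_mat_def crossing_sum nullvert_sum new_nullvert)
  qed
qed (simp_all add: Amat_def subdivide_mat_def length_edges')

lemma Gmat_subdivide:
  fixes t :: "'a::field"
  assumes "det (Amat D t) \<noteq> 0"
  shows "Gmat D' t = subdivide_inverse n p (Gmat D t)"
proof -
  have "Amat D' t * subdivide_inverse n p (Gmat D t) = 1\<^sub>m (length (edges D'))"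
    unfolding Amat_subdivide length_edges'
    using Gmat_right_inverse[OF assms] p_less
    by (intro subdivide_mat_mult_inverse) (simp_all add: Amat_def)
  then have "mat_inverse (Amat D' t) = Some (subdivide_inverse n p (Gmat D t))"
    by (intro mat_inverse_eq_Some) (simp_all add: Amat_def length_edges' subdivide_inverse_carrier)
  then show ?thesis
    by (simp add: Gmat_def)
qed

lemma gg_incoming:
  fixes t :: "'a::field"
  assumes "det (Amat D t) \<noteq> 0" "x \<in> set (edges D)" "y \<in> set (edges D)"
  shows "gg D' t (incoming x) (incoming y) = gg D t x y"
  using ix_less_nth_ix(1)[OF assms(2)] ix_less_nth_ix(1)[OF assms(3)]
  unfolding gg_def ix'_incoming[OF assms(2)] ix'_incoming[OF assms(3)] Gmat_subdivide[OF assms(1)]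
  by (simp add: subdivide_inverse_def skip_idx_less)

lemma gg_a:
  fixes t :: "'a::field"
  assumes "det (Amat D t) \<noteq> 0"
  shows "gg D' t a a = gg D t e e"
  using p_less unfolding gg_def ix'_a Gmat_subdivide[OF assms] by (simp add: subdivide_inverse_def)

lemma gg_b:
  fixes t :: "'a::field"
  assumes "det (Amat D t) \<noteq> 0"
  shows "gg D' t b b = gg D t e e"
  using gg_incoming[OF assms e e] by (simp add: incoming_def)

lemma crossing_edges_in:
  assumes "(s, i, j) \<in> set (crossings D)"
  shows "i \<in> set (edges D)" "j \<in> set (edges D)"
  using wf_diagram_crossingD(2,3)[OF wf assms] by (simp_all add: in_set_butlastD)

context
  fixes T1 T2 :: "'a::field"
  assumes det1: "det (Amat D T1) \<noteq> 0" and det2: "det (Amat D T2) \<noteq> 0"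
    and det3: "det (Amat D (T1 * T2)) \<noteq> 0"
begin

lemmas gg_incoming_T = gg_incoming[OF det1] gg_incoming[OF det2] gg_incoming[OF det3]

lemma F1_relabel_crossing:
  assumes "c \<in> set (crossings D)"
  shows "F1 D' T1 T2 (relabel_crossing c) = F1 D T1 T2 c"
proof -
  obtain s i j where c: "c = (s, i, j)"
    by (cases c)
  show ?thesis
    using crossing_edges_in[OF assms[unfolded c]]
    unfolding c relabel_crossing_def F1_def prod.case Let_def by (simp add: gg_incoming_T)
qed

lemma F2_relabel_crossing:
  assumes "c0 \<in> set (crossings D)" "c1 \<in> set (crossings D)"
  shows "F2 D' T1 T2 (relabel_crossing c0) (relabel_crossing c1) = F2 D T1 T2 c0 c1"
proof -
  obtain s0 i0 j0 s1 i1 j1 where c: "c0 = (s0, i0, j0)" "c1 = (s1, i1, j1)"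
    by (cases c0, cases c1)
  show ?thesis
    using crossing_edges_in[OF assms(1)[unfolded c(1)]] crossing_edges_in[OF assms(2)[unfolded c(2)]]
    unfolding c relabel_crossing_def F2_def prod.case Let_def by (simp add: gg_incoming_T)
qed

lemma sum_F3_edges':
  "sum_list (map (F3 D' T1 T2) (edges D')) = sum_list (map (F3 D T1 T2) (edges D))"
proof -
  have sum_concat: "sum_list (map f (concat xss)) = sum_list (map (\<lambda>xs. sum_list (map f xs)) xss)"
    for f :: "'l \<Rightarrow> 'a" and xss
    by (induction xss) simp_all
  have "sum_list (map (F3 D' T1 T2) (if l = e then [a, b] else [l])) = F3 D T1 T2 l"
    if l: "l \<in> set (edges D)" for l
  proof (cases "l = e")
    case True
    have "F3 D' T1 T2 a + F3 D' T1 T2 b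
        = (gg D (T1 * T2) e e - 1/2) * (of_int (rot D' a) + of_int (rot D' b))"
      unfolding F3_def gg_a[OF det3] gg_b[OF det3] by (simp add: algebra_simps)
    also have "\<dots> = F3 D T1 T2 e"
      using rot_split by (simp add: F3_def flip: of_int_add)
    finally show ?thesis
      using True by simp
  next
    case False
    then show ?thesis
      using gg_incoming[OF det3 l l] rot_other l by (simp add: F3_def incoming_def)
  qed
  then show ?thesis
    unfolding edges' sum_concat map_map o_def by (simp cong: map_cong)
qed

lemma theta0_at_eq: "theta0_at D' T1 T2 = theta0_at D T1 T2"
proof -
  have product_map: "List.product (map f xs) (map f ys) = map (map_prod f f) (List.product xs ys)"
    for f :: "int \<times> 'l \<times> 'l \<Rightarrow> int \<times> 'l \<times> 'l" and xs ys
    by (induction xs) simp_all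
  have "sum_list (map (F1 D' T1 T2) (crossings D')) = sum_list (map (F1 D T1 T2) (crossings D))"
    unfolding crossings'_eq map_map o_def by (simp add: F1_relabel_crossing cong: map_cong)
  moreover have "sum_list (map (\<lambda>(c0, c1). F2 D' T1 T2 c0 c1) (List.product (crossings D') (crossings D')))
      = sum_list (map (\<lambda>(c0, c1). F2 D T1 T2 c0 c1) (List.product (crossings D) (crossings D)))"
    unfolding crossings'_eq product_map map_map o_def
    by (intro arg_cong[where f = sum_list] map_cong) (auto simp: F2_relabel_crossing)
  ultimately show ?thesis
    unfolding theta0_at_def sum_F3_edges' by simp
qed

end

end

definition cleared_cr_entry :: "'l diagram \<Rightarrow> 'a::comm_ring_1 \<Rightarrow> int \<times> 'l \<times> 'l \<Rightarrow> nat \<Rightarrow> nat \<Rightarrow> 'a" where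
  "cleared_cr_entry D x c r q = (case c of (s, i, j) \<Rightarrow>
      (if (r, q) = (ix D i, ix D (nxt D i)) then - (if s = 1 then x * x else 1) else 0)
    + (if (r, q) = (ix D i, ix D (nxt D j)) then (if s = 1 then x * x - x else 1 - x) else 0)
    + (if (r, q) = (ix D j, ix D (nxt D j)) then - x else 0))"

text \<open>\<open>Amat_cleared D T\<close> is \<open>T \<cdot> Amat D T\<close> written without negative powers of \<open>T\<close>, so that it
  commutes with ring homomorphisms.\<close>

definition Amat_cleared :: "'l diagram \<Rightarrow> 'a::comm_ring_1 \<Rightarrow> 'a mat" where
  "Amat_cleared D x = mat (length (edges D)) (length (edges D)) (\<lambda>(r, q).
      (if r = q then x else 0)
    + sum_list (map (\<lambda>c. cleared_cr_entry D x c r q) (crossings D))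
    + sum_list (map (\<lambda>(j, k). if (r, q) = (ix D j, ix D k) then - x else 0) (nullverts D)))"

lemma dim_Amat_cleared [simp]:
  "dim_row (Amat_cleared D x) = length (edges D)" "dim_col (Amat_cleared D x) = length (edges D)"
  by (simp_all add: Amat_cleared_def)

lemma Amat_cleared_eq:
  fixes t :: "'a::field"
  assumes wf: "wf_diagram D" and t: "t \<noteq> 0"
  shows "Amat_cleared D t = t \<cdot>\<^sub>m Amat D t"
proof (rule eq_matI)
  fix r q assume rq: "r < dim_row (t \<cdot>\<^sub>m Amat D t)" "q < dim_col (t \<cdot>\<^sub>m Amat D t)"
  have crossing: "t * cr_entry D t c r q = cleared_cr_entry D t c r q" if "c \<in> set (crossings D)" for c
  proof -
    obtain s i j where c: "c = (s, i, j)"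
      by (cases c)
    have "s = 1 \<or> s = -1"
      using wf_diagram_crossingD(1)[OF wf that[unfolded c]] .
    then show ?thesis
      unfolding c cr_entry_def cleared_cr_entry_def using t
      by (auto simp: algebra_simps power_int_minus)
  qed
  have nullvert: "t * nv_entry D v r q = (case v of (j, k) \<Rightarrow> if (r, q) = (ix D j, ix D k) then - t else 0)"
    for v
    by (cases v) (simp add: nv_entry_def)
  show "Amat_cleared D t $$ (r, q) = (t \<cdot>\<^sub>m Amat D t) $$ (r, q)"
    using rq crossing nullvert
    by (simp add: Amat_cleared_def Amat_def distrib_left flip: sum_list_const_mult cong: map_cong)
qed (simp_all add: Amat_cleared_def Amat_def)

lemma (in comm_ring_hom) map_mat_Amat_cleared: "map_mat hom (Amat_cleared D x) = Amat_cleared D (hom x)"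
proof -
  have "hom (cleared_cr_entry D x c r q) = cleared_cr_entry D (hom x) c r q" for c r q
    by (cases c) (simp add: cleared_cr_entry_def hom_distribs)
  moreover have "hom (case v of (j, k) \<Rightarrow> if (r, q) = (ix D j, ix D k) then - x else 0)
      = (case v of (j, k) \<Rightarrow> if (r, q) = (ix D j, ix D k) then - hom x else 0)" for v r q
    by (cases v) (simp add: hom_distribs)
  ultimately show ?thesis
    by (intro eq_matI) (simp_all add: Amat_cleared_def hom_distribs hom_sum_list o_def)
qed

text \<open>At \<open>T = 1\<close> only the diagonal and entries at positions \<open>(r, Suc r)\<close> survive.\<close>

lemma Amat_cleared_one_lower:
  assumes wf: "wf_diagram D" and rq: "r < length (edges D)" "q \<le> r"
  shows "Amat_cleared D (1::'a::comm_ring_1) $$ (r, q) = (if r = q then 1 else 0)"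
proof -
  have dist: "distinct (edges D)"
    using wf by (simp add: wf_diagram_def)
  have "cleared_cr_entry D (1::'a) c r q = 0" if c: "c \<in> set (crossings D)" for c
  proof -
    obtain s i j where c_eq: "c = (s, i, j)"
      by (cases c)
    have "ix D (nxt D i) = Suc (ix D i)" "ix D (nxt D j) = Suc (ix D j)"
      using ix_nxt(2)[OF dist] wf_diagram_crossingD(2,3)[OF wf c[unfolded c_eq]] by simp_all
    then show ?thesis
      unfolding c_eq cleared_cr_entry_def using rq(2) by auto
  qed
  moreover have "(case v of (j, k) \<Rightarrow> if (r, q) = (ix D j, ix D k) then - 1 else 0) = (0::'a)"
    if v: "v \<in> set (nullverts D)" for v
  proof -
    obtain j k where v_eq: "v = (j, k)"
      by (cases v)
    have "ix D k = Suc (ix D j)"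
      using ix_nxt(2)[OF dist] wf_diagram_nullvertD[OF wf v[unfolded v_eq]] by simp
    then show ?thesis
      unfolding v_eq using rq(2) by auto
  qed
  ultimately show ?thesis
    using rq by (simp add: Amat_cleared_def cong: map_cong)
qed

lemma det_Amat_cleared_one:
  assumes "wf_diagram D"
  shows "det (Amat_cleared D (1::'a::comm_ring_1)) = 1"
proof -
  let ?B = "Amat_cleared D (1::'a)" and ?n = "length (edges D)"
  have "upper_triangular ?B"
  proof (unfold upper_triangular_def, intro allI impI)
    fix r q assume "r < dim_row ?B" "q < r"
    then show "?B $$ (r, q) = 0"
      using Amat_cleared_one_lower[OF assms, of r q] by simp
  qed
  moreover have "diag_mat ?B = map (\<lambda>i. 1) [0..<?n]"
    unfolding diag_mat_def by (intro map_cong) (simp_all add: Amat_cleared_one_lower[OF assms])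
  ultimately show ?thesis
    by (simp add: det_upper_triangular[of ?B ?n] carrier_matI map_replicate_trivial)
qed

lemma det_Amat_to_fract_nonzero:
  fixes h :: "'a::idom \<Rightarrow> 'b::comm_ring_1"
  assumes wf: "wf_diagram D" and h: "comm_ring_hom h" and hP: "h P = 1"
  shows "det (Amat D (to_fract P)) \<noteq> 0"
proof -
  interpret h: comm_ring_hom h
    by (rule h)
  interpret to_fract: inj_comm_ring_hom "to_fract :: 'a \<Rightarrow> 'a fract"
    by unfold_locales auto
  have "h (det (Amat_cleared D P)) = det (Amat_cleared D (h P))"
    by (simp flip: h.map_mat_Amat_cleared)
  then have "h (det (Amat_cleared D P)) = 1"
    using det_Amat_cleared_one[OF wf] hP by simp
  then have "det (Amat_cleared D P) \<noteq> 0"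
    by auto
  moreover have "to_fract (det (Amat_cleared D P)) = det (Amat_cleared D (to_fract P))"
    by (simp flip: to_fract.map_mat_Amat_cleared)
  ultimately have "det (Amat_cleared D (to_fract P)) \<noteq> 0"
    by (metis to_fract.hom_0_iff)
  moreover have "to_fract P \<noteq> 0"
    using hP by auto
  ultimately show ?thesis
    using Amat_cleared_eq[OF wf] by (metis det_smult mult_zero_right)
qed

lemma det_Amat_vars_nonzero:
  assumes "wf_diagram D"
  shows "det (Amat D varT1) \<noteq> 0" "det (Amat D varT2) \<noteq> 0" "det (Amat D (varT1 * varT2)) \<noteq> 0"
proof -
  have h: "comm_ring_hom (\<lambda>P :: rat poly poly. poly (poly P 1) 1)"
    by unfold_locales simp_all
  show "det (Amat D varT1) \<noteq> 0"
    unfolding varT1_def to_fract_def[symmetric] by (rule det_Amat_to_fract_nonzero[OF assms h]) simp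
  show "det (Amat D varT2) \<noteq> 0"
    unfolding varT2_def to_fract_def[symmetric] by (rule det_Amat_to_fract_nonzero[OF assms h]) simp
  have "varT1 * varT2 = to_fract ([:[:0, 1:]:] * [:0, 1:])"
    by (simp add: varT1_def varT2_def to_fract_def)
  then show "det (Amat D (varT1 * varT2)) \<noteq> 0"
    by (simp only:) (rule det_Amat_to_fract_nonzero[OF assms h], simp)
qed

lemma theta0_null_vertex_move:
  assumes "wf_diagram D" "wf_diagram D'" "null_vertex_move D D'"
  shows "theta0 D' = theta0 D"
proof -
  obtain e a b where "e \<in> set (edges D)"
    "edges D' = concat (map (\<lambda>l. if l = e then [a, b] else [l]) (edges D))"
    "crossings D' = map (\<lambda>(s, i, j). (s, if i = e then b else i, if j = e then b else j)) (crossings D)"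
    "nullverts D' = (a, b) # map (\<lambda>(j, k). (if j = e then b else j, if k = e then a else k)) (nullverts D)"
    "\<forall>l \<in> set (edges D). l \<noteq> e \<longrightarrow> rot D' l = rot D l" "rot D' a + rot D' b = rot D e"
    using assms(3) unfolding null_vertex_move_def by blast
  then interpret null_vertex_insertion D D' e a b
    using assms(1,2) by unfold_locales
  show ?thesis
    unfolding theta0_def using theta0_at_eq det_Amat_vars_nonzero[OF assms(1)] by blast
qed

theorem mainTheorem5:
  fixes D D' :: "'l diagram"
  assumes "wf_diagram D" and "wf_diagram D'"
    and "null_vertex_move D D' \<or> null_vertex_move D' D"
  shows "theta0 D' = theta0 D"
  using assms theta0_null_vertex_move[of D D'] theta0_null_vertex_move[of D' D] by metis

end
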